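(* Fix an integer $d\ge 2$ and for $k\ge2$ let $G_k=\prod_{i=1}^d P_k$ be the $d$-dimensional grid with all sides of $k$ vertices. There are constants $a_1,a_2,b_1,b_2>0$, depending only on $d$, such that for all $k\ge2$: $$a_1k\le\mathrm{bdim}(G_k)\le a_2k, \qquad b_1k^d\le\mathrm{adim}(G_k)\le b_2k^d.$$ Moreover, the ratios $\mathrm{adim}(G)/\mathrm{bdim}(G)$ and $\mathrm{bdim}(G)/\dim(G)$ are unbounded over connected graphs $G$; in particular, for each fixed $d\ge2$ both tend to infinity along $G_k$ as $k\to\infty$.
   Context: $\prod_{i=1}^d P_k$ is the iterated Cartesian product of $d$ copies of the path $P_k$. $d(x,y)$ denotes graph distance. A set $S\subseteq V(G)$ is a resolving set if for all distinct $x,y$ there is $z\in S$ with $d(x,z)\ne d(y,z)$. $\dim(G)$ is the minimum size of a resolving set. For an integer $k\ge1$ let $d_k(x,y)=\min\{d(x,y),k+1\}$. A set $A\subseteq V(G)$ is an adjacency resolving set if for all distinct $x,y\in V(G)$ there is $z\in A$ with $d_1(x,z)\ne d_1(y,z)$. $\mathrm{adim}(G)$ is the minimum size of an adjacency resolving set. A function $f:V(G)\to\mathbb{Z}_{\ge 0}$ is a resolving broadcast of $G$ if for all distinct $x,y\in V(G)$ there is $z\in V(G)$ with $f(z)=i>0$ and $d_i(x,z)\ne d_i(y,z)$. The broadcast dimension $\mathrm{bdim}(G)$ is the minimum of $\sum_{v\in V(G)}f(v)$ over all resolving broadcasts $f$ of $G$. *)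

theory Defs
  imports Complex_Main
begin

definition is_walk :: "'a set \<Rightarrow> ('a \<Rightarrow> 'a \<Rightarrow> bool) \<Rightarrow> 'a list \<Rightarrow> bool" where
  "is_walk V E xs \<longleftrightarrow> xs \<noteq> [] \<and> set xs \<subseteq> V \<and> (\<forall>i. Suc i < length xs \<longrightarrow> E (xs ! i) (xs ! Suc i))"

definition gdist :: "'a set \<Rightarrow> ('a \<Rightarrow> 'a \<Rightarrow> bool) \<Rightarrow> 'a \<Rightarrow> 'a \<Rightarrow> nat" where
  "gdist V E x y = (LEAST n. \<exists>xs. is_walk V E xs \<and> hd xs = x \<and> last xs = y \<and> length xs = Suc n)"

definition tdist :: "'a set \<Rightarrow> ('a \<Rightarrow> 'a \<Rightarrow> bool) \<Rightarrow> nat \<Rightarrow> 'a \<Rightarrow> 'a \<Rightarrow> nat" where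
  "tdist V E k x y = min (gdist V E x y) (k + 1)"

definition resolving_set :: "'a set \<Rightarrow> ('a \<Rightarrow> 'a \<Rightarrow> bool) \<Rightarrow> 'a set \<Rightarrow> bool" where
  "resolving_set V E S \<longleftrightarrow> S \<subseteq> V \<and>
     (\<forall>x\<in>V. \<forall>y\<in>V. x \<noteq> y \<longrightarrow> (\<exists>z\<in>S. gdist V E x z \<noteq> gdist V E y z))"

definition metric_dim :: "'a set \<Rightarrow> ('a \<Rightarrow> 'a \<Rightarrow> bool) \<Rightarrow> nat" where
  "metric_dim V E = (LEAST n. \<exists>S. finite S \<and> resolving_set V E S \<and> card S = n)"

definition adj_resolving_set :: "'a set \<Rightarrow> ('a \<Rightarrow> 'a \<Rightarrow> bool) \<Rightarrow> 'a set \<Rightarrow> bool" where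
  "adj_resolving_set V E A \<longleftrightarrow> A \<subseteq> V \<and>
     (\<forall>x\<in>V. \<forall>y\<in>V. x \<noteq> y \<longrightarrow> (\<exists>z\<in>A. tdist V E 1 x z \<noteq> tdist V E 1 y z))"

definition adim :: "'a set \<Rightarrow> ('a \<Rightarrow> 'a \<Rightarrow> bool) \<Rightarrow> nat" where
  "adim V E = (LEAST n. \<exists>A. finite A \<and> adj_resolving_set V E A \<and> card A = n)"

definition resolving_broadcast :: "'a set \<Rightarrow> ('a \<Rightarrow> 'a \<Rightarrow> bool) \<Rightarrow> ('a \<Rightarrow> nat) \<Rightarrow> bool" where
  "resolving_broadcast V E f \<longleftrightarrow> (\<forall>v. v \<notin> V \<longrightarrow> f v = 0) \<and>
     (\<forall>x\<in>V. \<forall>y\<in>V. x \<noteq> y \<longrightarrow>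
        (\<exists>z\<in>V. f z > 0 \<and> tdist V E (f z) x z \<noteq> tdist V E (f z) y z))"

definition bdim :: "'a set \<Rightarrow> ('a \<Rightarrow> 'a \<Rightarrow> bool) \<Rightarrow> nat" where
  "bdim V E = (LEAST n. \<exists>f. resolving_broadcast V E f \<and> (\<Sum>v\<in>V. f v) = n)"

text \<open>The grid \<Prod>_{i=1}^d P_k: vertices are lists of length d with entries in {0..<k};
  two vertices are adjacent iff they differ in exactly one coordinate, by exactly 1
  (Cartesian product of paths).\<close>
definition grid_V :: "nat \<Rightarrow> nat \<Rightarrow> nat list set" where
  "grid_V d k = {xs. length xs = d \<and> (\<forall>i<d. xs ! i < k)}"

definition grid_E :: "nat list \<Rightarrow> nat list \<Rightarrow> bool" where
  "grid_E xs ys \<longleftrightarrow> length xs = length ys \<and>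
     (\<exists>i<length xs. (ys ! i = Suc (xs ! i) \<or> xs ! i = Suc (ys ! i)) \<and>
        (\<forall>j<length xs. j \<noteq> i \<longrightarrow> xs ! j = ys ! j))"

end

theory Submission
  imports Defs
begin

text \<open>Distances in the grid are taxicab distances. Hence the origin together with the \<open>d\<close>
  far corners on the axes resolves the grid (two points at equal distance from the origin are
  separated by the corner on an axis where they differ), and broadcasting the diameter
  \<open>d(k - 1)\<close> from these \<open>d + 1\<close> corners gives \<open>bdim = O(k)\<close> and \<open>dim \<le> d + 1\<close>.
  For the lower bounds, at most one vertex can be out of reach of all broadcasting vertices;
  a broadcast of strength \<open>f z\<close> reaches at most \<open>2 f z + 1\<close> vertices of an axis of length \<open>k\<close>,
  and an adjacency landmark reaches at most \<open>2d + 1\<close> vertices of the whole grid. This gives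
  \<open>bdim = \<Omega>(k)\<close> and \<open>adim = \<Omega>(k\<^sup>d)\<close>, and since \<open>d \<ge> 2\<close> both ratios grow linearly in \<open>k\<close>.\<close>

lemma is_walk_Cons:
  assumes "is_walk V E xs" "x \<in> V" "E x (hd xs)"
  shows "is_walk V E (x # xs)"
  using assms unfolding is_walk_def
  by (auto simp: hd_conv_nth nth_Cons split: nat.splits)

lemma gdist_le_walk:
  assumes "is_walk V E xs" "hd xs = x" "last xs = y"
  shows "gdist V E x y \<le> length xs - 1"
  unfolding gdist_def
proof (rule Least_le)
  show "\<exists>ys. is_walk V E ys \<and> hd ys = x \<and> last ys = y \<and> length ys = Suc (length xs - 1)"
    using assms by (intro exI[of _ xs]) (auto simp: is_walk_def)
qed

lemma shortest_walk:
  assumes "is_walk V E xs" "hd xs = x" "last xs = y"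
  obtains ys where "is_walk V E ys" "hd ys = x" "last ys = y" "length ys = Suc (gdist V E x y)"
proof -
  let ?P = "\<lambda>n. \<exists>ys. is_walk V E ys \<and> hd ys = x \<and> last ys = y \<and> length ys = Suc n"
  have "?P (length xs - 1)" using assms by (intro exI[of _ xs]) (auto simp: is_walk_def)
  then have "?P (gdist V E x y)" unfolding gdist_def by (rule LeastI)
  then show ?thesis using that by blast
qed

lemma gdist_le_1_imp_adjacent:
  assumes "is_walk V E xs" "hd xs = x" "last xs = y" "gdist V E x y \<le> 1"
  shows "x = y \<or> E x y"
proof -
  obtain ys where ys: "is_walk V E ys" "hd ys = x" "last ys = y" "length ys = Suc (gdist V E x y)"
    using shortest_walk[OF assms(1-3)] .
  show ?thesis
  proof (cases "gdist V E x y")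
    case 0
    then obtain a where "ys = [a]" using ys(4) by (metis length_0_conv length_Suc_conv)
    then show ?thesis using ys by simp
  next
    case (Suc n)
    then have "length ys = 2" using ys(4) assms(4) by simp
    then obtain a b where "ys = [a, b]" by (auto simp: length_Suc_conv numeral_2_eq_2)
    moreover have "E a b" using ys(1) \<open>ys = [a, b]\<close> unfolding is_walk_def by (auto dest: spec[of _ 0])
    ultimately show ?thesis using ys(2,3) by simp
  qed
qed

text \<open>Two vertices of \<open>L\<close> lying outside every ball have truncated distance \<open>r z + 1\<close> to
  every \<open>z\<close>, so at most one vertex of \<open>L\<close> escapes all balls.\<close>
lemma card_le_sum_card_balls:
  assumes "finite L" "finite Z"
    and resolves: "\<And>x y. x \<in> L \<Longrightarrow> y \<in> L \<Longrightarrow> x \<noteq> y \<Longrightarrow>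
                      \<exists>z\<in>Z. tdist V E (r z) x z \<noteq> tdist V E (r z) y z"
  shows "card L \<le> (\<Sum>z\<in>Z. card {x\<in>L. gdist V E x z \<le> r z}) + 1"
proof -
  define W where "W = {x\<in>L. \<forall>z\<in>Z. r z < gdist V E x z}"
  have W_subsingleton: "a = b" if ab: "a \<in> W" "b \<in> W" for a b
  proof (rule ccontr)
    assume "a \<noteq> b"
    then obtain z where "z \<in> Z" "tdist V E (r z) a z \<noteq> tdist V E (r z) b z"
      using resolves ab unfolding W_def by blast
    moreover have "tdist V E (r z) a z = Suc (r z)" "tdist V E (r z) b z = Suc (r z)"
      using ab \<open>z \<in> Z\<close> unfolding W_def tdist_def by (auto simp: min_def)
    ultimately show False by simp
  qed
  have "finite W" using \<open>finite L\<close> unfolding W_def by simp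
  then have "card W \<le> 1"
    unfolding One_nat_def card_le_Suc0_iff_eq[OF \<open>finite W\<close>] using W_subsingleton by blast
  have "L \<subseteq> (\<Union>z\<in>Z. {x\<in>L. gdist V E x z \<le> r z}) \<union> W"
    unfolding W_def by (auto simp: not_less)
  moreover have "finite ((\<Union>z\<in>Z. {x\<in>L. gdist V E x z \<le> r z}) \<union> W)"
    using assms(1,2) \<open>finite W\<close> by simp
  ultimately have "card L \<le> card ((\<Union>z\<in>Z. {x\<in>L. gdist V E x z \<le> r z}) \<union> W)"
    by (simp add: card_mono)
  also have "\<dots> \<le> card (\<Union>z\<in>Z. {x\<in>L. gdist V E x z \<le> r z}) + card W"
    by (rule card_Un_le)
  also have "\<dots> \<le> (\<Sum>z\<in>Z. card {x\<in>L. gdist V E x z \<le> r z}) + card W"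
    using card_UN_le[OF assms(2)] by simp
  finally show ?thesis using \<open>card W \<le> 1\<close> by linarith
qed

lemma metric_dim_le:
  "finite S \<Longrightarrow> resolving_set V E S \<Longrightarrow> metric_dim V E \<le> card S"
  unfolding metric_dim_def by (rule Least_le) blast

lemma metric_dim_pos:
  assumes "finite S" "resolving_set V E S" "x \<in> V" "y \<in> V" "x \<noteq> y"
  shows "0 < metric_dim V E"
proof -
  have "\<exists>S. finite S \<and> resolving_set V E S \<and> card S = metric_dim V E"
    unfolding metric_dim_def by (rule LeastI[of _ "card S"]) (use assms in blast)
  then obtain S' where "finite S'" "resolving_set V E S'" "card S' = metric_dim V E" by blast
  moreover have "S' \<noteq> {}" using \<open>resolving_set V E S'\<close> assms(3-5) unfolding resolving_set_def by blast
  ultimately show ?thesis by auto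
qed

lemma adim_le:
  "finite A \<Longrightarrow> adj_resolving_set V E A \<Longrightarrow> adim V E \<le> card A"
  unfolding adim_def by (rule Least_le) blast

lemma adim_attained:
  assumes "finite A" "adj_resolving_set V E A"
  obtains A' where "finite A'" "adj_resolving_set V E A'" "card A' = adim V E"
proof -
  have "\<exists>A'. finite A' \<and> adj_resolving_set V E A' \<and> card A' = adim V E"
    unfolding adim_def by (rule LeastI[of _ "card A"]) (use assms in blast)
  then show ?thesis using that by blast
qed

lemma bdim_le:
  "resolving_broadcast V E f \<Longrightarrow> bdim V E \<le> (\<Sum>v\<in>V. f v)"
  unfolding bdim_def by (rule Least_le) blast

lemma bdim_attained:
  assumes "resolving_broadcast V E f"
  obtains g where "resolving_broadcast V E g" "(\<Sum>v\<in>V. g v) = bdim V E"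
proof -
  have "\<exists>g. resolving_broadcast V E g \<and> (\<Sum>v\<in>V. g v) = bdim V E"
    unfolding bdim_def by (rule LeastI[of _ "\<Sum>v\<in>V. f v"]) (use assms in blast)
  then show ?thesis using that by blast
qed

definition absdiff :: "nat \<Rightarrow> nat \<Rightarrow> nat" where
  "absdiff a b = (a - b) + (b - a)"

definition l1_dist :: "nat list \<Rightarrow> nat list \<Rightarrow> nat" where
  "l1_dist x y = (\<Sum>j<length x. absdiff (x ! j) (y ! j))"

lemma absdiff_commute: "absdiff a b = absdiff b a"
  by (simp add: absdiff_def)

lemma absdiff_self [simp]: "absdiff a a = 0"
  by (simp add: absdiff_def)

lemma absdiff_eq_0_iff: "absdiff a b = 0 \<longleftrightarrow> a = b"
  by (auto simp: absdiff_def)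

lemma finite_absdiff_le: "finite {j. absdiff j c \<le> r}"
  by (rule finite_subset[of _ "{c - r .. c + r}"]) (auto simp: absdiff_def)

lemma card_absdiff_le: "card {j. absdiff j c \<le> r} \<le> 2 * r + 1"
proof -
  have "{j. absdiff j c \<le> r} \<subseteq> {c - r .. c + r}" by (auto simp: absdiff_def)
  then have "card {j. absdiff j c \<le> r} \<le> card {c - r .. c + r}" by (rule card_mono[rotated]) simp
  then show ?thesis by simp
qed

lemma l1_dist_self [simp]: "l1_dist x x = 0"
  by (simp add: l1_dist_def)

lemma l1_dist_commute: "length x = length y \<Longrightarrow> l1_dist x y = l1_dist y x"
  unfolding l1_dist_def by (simp add: absdiff_commute)

lemma l1_dist_eq_0_iff:
  assumes "length x = length y"
  shows "l1_dist x y = 0 \<longleftrightarrow> x = y"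
  using assms unfolding l1_dist_def by (auto simp: absdiff_eq_0_iff intro: nth_equalityI)

lemma absdiff_nth_le_l1_dist: "i < length x \<Longrightarrow> absdiff (x ! i) (y ! i) \<le> l1_dist x y"
  unfolding l1_dist_def by (rule member_le_sum) auto

lemma l1_dist_triangle:
  assumes "length x = length y" "length y = length z"
  shows "l1_dist x z \<le> l1_dist x y + l1_dist y z"
proof -
  have "l1_dist x z \<le> (\<Sum>j<length x. absdiff (x ! j) (y ! j) + absdiff (y ! j) (z ! j))"
    unfolding l1_dist_def by (rule sum_mono) (auto simp: absdiff_def)
  also have "\<dots> = l1_dist x y + l1_dist y z"
    using assms by (simp add: l1_dist_def sum.distrib)
  finally show ?thesis .
qed

lemma l1_dist_update:
  assumes "i < length x" "length y = length x"
  shows "l1_dist (x[i := a]) y + absdiff (x ! i) (y ! i) = l1_dist x y + absdiff a (y ! i)"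
proof -
  let ?R = "{..<length x} - {i}"
  have split: "l1_dist z y = absdiff (z ! i) (y ! i) + (\<Sum>j\<in>?R. absdiff (z ! j) (y ! j))"
    if "length z = length x" for z
    using that assms(1) sum.remove[of "{..<length x}" i] unfolding l1_dist_def by simp
  have "(\<Sum>j\<in>?R. absdiff (x[i := a] ! j) (y ! j)) = (\<Sum>j\<in>?R. absdiff (x ! j) (y ! j))"
    by (intro sum.cong) auto
  then show ?thesis using split[of x] split[of "x[i := a]"] assms(1) by simp
qed

lemma grid_E_l1_dist:
  assumes "grid_E x y"
  shows "l1_dist x y = 1"
proof -
  obtain i where i: "i < length x" "y ! i = Suc (x ! i) \<or> x ! i = Suc (y ! i)"
    and others: "\<forall>j<length x. j \<noteq> i \<longrightarrow> x ! j = y ! j" and len: "length x = length y"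
    using assms unfolding grid_E_def by blast
  have "x[i := y ! i] = y"
  proof (rule nth_equalityI)
    fix j assume "j < length (x[i := y ! i])"
    then show "x[i := y ! i] ! j = y ! j" using others len by (cases "j = i") auto
  qed (use len in simp)
  moreover have "l1_dist (x[i := y ! i]) y + absdiff (x ! i) (y ! i) = l1_dist x y + absdiff (y ! i) (y ! i)"
    by (rule l1_dist_update) (use i(1) len in auto)
  ultimately have "l1_dist x y = absdiff (x ! i) (y ! i)" by simp
  then show ?thesis using i(2) by (auto simp: absdiff_def)
qed

lemma l1_dist_walk_le:
  assumes "is_walk V grid_E xs"
  shows "l1_dist (hd xs) (last xs) \<le> length xs - 1"
proof -
  have "l1_dist (hd xs) (last xs) \<le> length xs - 1 \<and> length (hd xs) = length (last xs)"
    using assms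
  proof (induction xs)
    case Nil
    then show ?case by (simp add: is_walk_def)
  next
    case (Cons a xs)
    show ?case
    proof (cases "xs = []")
      case True
      then show ?thesis by simp
    next
      case False
      have "is_walk V grid_E xs" using Cons.prems False unfolding is_walk_def by auto
      then have IH: "l1_dist (hd xs) (last xs) \<le> length xs - 1" "length (hd xs) = length (last xs)"
        using Cons.IH by auto
      have edge: "grid_E a (hd xs)"
        using Cons.prems False unfolding is_walk_def by (auto simp: hd_conv_nth dest: spec[of _ 0])
      then have "length a = length (hd xs)" by (simp add: grid_E_def)
      then have "l1_dist a (last xs) \<le> l1_dist a (hd xs) + l1_dist (hd xs) (last xs)"
        using IH(2) by (intro l1_dist_triangle) auto
      moreover have "0 < length xs" using False by simp
      ultimately have "l1_dist a (last xs) \<le> length xs" using IH(1) grid_E_l1_dist[OF edge] by linarith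
      then show ?thesis using False IH(2) \<open>length a = length (hd xs)\<close> by simp
    qed
  qed
  then show ?thesis ..
qed

lemma grid_V_length: "x \<in> grid_V d k \<Longrightarrow> length x = d"
  by (simp add: grid_V_def)

lemma grid_V_eq_lists: "grid_V d k = {xs. set xs \<subseteq> {..<k} \<and> length xs = d}"
  unfolding grid_V_def by (auto simp: in_set_conv_nth) (meson lessThan_iff nth_mem subsetD)

lemma finite_grid_V: "finite (grid_V d k)"
  unfolding grid_V_eq_lists by (rule finite_lists_length_eq) simp

lemma card_grid_V: "card (grid_V d k) = k ^ d"
  unfolding grid_V_eq_lists by (subst card_lists_length_eq) simp_all

lemma grid_step_towards:
  assumes x: "x \<in> grid_V d k" and y: "y \<in> grid_V d k" and "x \<noteq> y"
  obtains x' where "x' \<in> grid_V d k" "grid_E x x'" "l1_dist x' y + 1 = l1_dist x y"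
proof -
  have lx: "length x = d" and ly: "length y = d" using x y by (auto simp: grid_V_def)
  obtain i where i: "i < d" "x ! i \<noteq> y ! i" using \<open>x \<noteq> y\<close> lx ly by (metis nth_equalityI)
  define v where "v = (if x ! i < y ! i then Suc (x ! i) else x ! i - 1)"
  have "y ! i < k" using y i by (simp add: grid_V_def)
  then have "x[i := v] \<in> grid_V d k" using x i unfolding grid_V_def v_def
    by (auto simp: nth_list_update)
  moreover have "grid_E x (x[i := v])" unfolding grid_E_def using i lx
    by (intro conjI exI[of _ i]) (auto simp: v_def nth_list_update)
  moreover have "l1_dist (x[i := v]) y + absdiff (x ! i) (y ! i) = l1_dist x y + absdiff v (y ! i)"
    by (rule l1_dist_update) (use i lx ly in auto)
  moreover have "absdiff v (y ! i) + 1 = absdiff (x ! i) (y ! i)"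
    using i by (auto simp: v_def absdiff_def)
  ultimately show ?thesis using that by fastforce
qed

lemma grid_walk_exists:
  assumes "x \<in> grid_V d k" "y \<in> grid_V d k"
  shows "\<exists>xs. is_walk (grid_V d k) grid_E xs \<and> hd xs = x \<and> last xs = y \<and> length xs = Suc (l1_dist x y)"
  using assms(1)
proof (induction "l1_dist x y" arbitrary: x)
  case 0
  then have "x = y" using assms(2) l1_dist_eq_0_iff by (metis grid_V_length)
  then show ?case using 0 by (intro exI[of _ "[x]"]) (auto simp: is_walk_def)
next
  case (Suc n)
  then have "x \<noteq> y" by (metis l1_dist_self nat.distinct(1))
  then obtain x' where x': "x' \<in> grid_V d k" "grid_E x x'" "l1_dist x' y + 1 = l1_dist x y"
    using grid_step_towards[OF Suc.prems assms(2)] by blast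
  moreover have "n = l1_dist x' y" using x'(3) Suc.hyps(2) by simp
  ultimately obtain xs where xs: "is_walk (grid_V d k) grid_E xs" "hd xs = x'" "last xs = y"
    "length xs = Suc (l1_dist x' y)"
    using Suc.hyps(1) by blast
  have "is_walk (grid_V d k) grid_E (x # xs)" using xs x' Suc.prems by (intro is_walk_Cons) auto
  then show ?case using xs x' by (intro exI[of _ "x # xs"]) (auto simp: is_walk_def)
qed

lemma gdist_grid:
  assumes "x \<in> grid_V d k" "y \<in> grid_V d k"
  shows "gdist (grid_V d k) grid_E x y = l1_dist x y"
proof (rule antisym)
  obtain xs where xs: "is_walk (grid_V d k) grid_E xs" "hd xs = x" "last xs = y"
    "length xs = Suc (l1_dist x y)"
    using grid_walk_exists[OF assms] by blast
  then show "gdist (grid_V d k) grid_E x y \<le> l1_dist x y" using gdist_le_walk by fastforce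
  obtain ys where "is_walk (grid_V d k) grid_E ys" "hd ys = x" "last ys = y"
    "length ys = Suc (gdist (grid_V d k) grid_E x y)"
    using shortest_walk[OF xs(1-3)] .
  then show "l1_dist x y \<le> gdist (grid_V d k) grid_E x y" using l1_dist_walk_le by fastforce
qed

lemma l1_dist_le_diameter:
  assumes "x \<in> grid_V d k" "y \<in> grid_V d k"
  shows "l1_dist x y \<le> d * (k - 1)"
proof -
  have "l1_dist x y = (\<Sum>j<d. absdiff (x ! j) (y ! j))" using assms by (simp add: l1_dist_def grid_V_def)
  also have "\<dots> \<le> (\<Sum>j<d. k - 1)"
  proof (rule sum_mono)
    fix j assume "j \<in> {..<d}"
    then have "x ! j < k" "y ! j < k" using assms by (auto simp: grid_V_def)
    then show "absdiff (x ! j) (y ! j) \<le> k - 1" by (simp add: absdiff_def)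
  qed
  finally show ?thesis by simp
qed

definition grid_corners :: "nat \<Rightarrow> nat \<Rightarrow> nat list set" where
  "grid_corners d k = insert (replicate d 0) ((\<lambda>i. (replicate d 0)[i := k - 1]) ` {..<d})"

lemma grid_corners_subset: "0 < k \<Longrightarrow> grid_corners d k \<subseteq> grid_V d k"
  unfolding grid_corners_def grid_V_def by (auto simp: nth_list_update)

lemma finite_grid_corners: "finite (grid_corners d k)"
  unfolding grid_corners_def by simp

lemma card_grid_corners: "card (grid_corners d k) \<le> d + 1"
proof -
  have "card (grid_corners d k) \<le> Suc (card ((\<lambda>i. (replicate d 0)[i := k - 1]) ` {..<d}))"
    unfolding grid_corners_def by (simp add: card_insert_if)
  also have "card ((\<lambda>i. (replicate d 0)[i := k - 1]) ` {..<d}) \<le> d"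
    using card_image_le[of "{..<d}"] by fastforce
  finally show ?thesis by simp
qed

text \<open>Moving the reference corner from the origin to the far end of axis \<open>i\<close> changes the
  distance to \<open>x\<close> by \<open>k - 1 - 2 x\<^sub>i\<close>, which separates points differing in coordinate \<open>i\<close>.\<close>
lemma grid_corners_resolve:
  assumes "0 < k" "x \<in> grid_V d k" "y \<in> grid_V d k" "x \<noteq> y"
  shows "\<exists>z\<in>grid_corners d k. l1_dist x z \<noteq> l1_dist y z"
proof (cases "l1_dist x (replicate d 0) = l1_dist y (replicate d 0)")
  case False
  then show ?thesis unfolding grid_corners_def by blast
next
  case True
  have lx: "length x = d" and ly: "length y = d" using assms by (auto simp: grid_V_def)
  obtain i where i: "i < d" "x ! i \<noteq> y ! i" using \<open>x \<noteq> y\<close> lx ly by (metis nth_equalityI)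
  define e where "e = (replicate d (0::nat))[i := k - 1]"
  have shift: "l1_dist v e + v ! i = l1_dist v (replicate d 0) + absdiff (k - 1) (v ! i)"
    if "length v = d" for v
  proof -
    have "l1_dist e v + absdiff 0 (v ! i) = l1_dist (replicate d 0) v + absdiff (k - 1) (v ! i)"
      unfolding e_def using l1_dist_update[of i "replicate d 0" v "k - 1"] i(1) that by simp
    then show ?thesis using that l1_dist_commute[of v] by (simp add: e_def absdiff_def)
  qed
  have "x ! i < k" "y ! i < k" using assms(2,3) i(1) by (auto simp: grid_V_def)
  then have "l1_dist x e \<noteq> l1_dist y e"
    using shift[OF lx] shift[OF ly] True i(2) by (auto simp: absdiff_def)
  moreover have "e \<in> grid_corners d k" using i(1) unfolding grid_corners_def e_def by blast
  ultimately show ?thesis by blast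
qed

lemma resolving_set_grid_corners:
  assumes "0 < k"
  shows "resolving_set (grid_V d k) grid_E (grid_corners d k)"
  unfolding resolving_set_def
proof (intro conjI ballI impI)
  show "grid_corners d k \<subseteq> grid_V d k" using grid_corners_subset[OF assms] .
  fix x y assume xy: "x \<in> grid_V d k" "y \<in> grid_V d k" "x \<noteq> y"
  then obtain z where z: "z \<in> grid_corners d k" "l1_dist x z \<noteq> l1_dist y z"
    using grid_corners_resolve[OF assms] by blast
  then have "z \<in> grid_V d k" using grid_corners_subset[OF assms] by blast
  then show "\<exists>z\<in>grid_corners d k. gdist (grid_V d k) grid_E x z \<noteq> gdist (grid_V d k) grid_E y z"
    using z gdist_grid xy(1,2) by metis
qed

lemma metric_dim_grid_le: "0 < k \<Longrightarrow> metric_dim (grid_V d k) grid_E \<le> d + 1"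
  using metric_dim_le[OF finite_grid_corners resolving_set_grid_corners] card_grid_corners
  by (metis le_trans)

lemma metric_dim_grid_pos:
  assumes "1 \<le> d" "2 \<le> k"
  shows "0 < metric_dim (grid_V d k) grid_E"
proof (rule metric_dim_pos[OF finite_grid_corners resolving_set_grid_corners])
  show "replicate d 0 \<in> grid_V d k" "(replicate d 0)[0 := 1] \<in> grid_V d k"
    using assms by (auto simp: grid_V_def nth_list_update)
  show "replicate d 0 \<noteq> (replicate d (0::nat))[0 := 1]"
  proof
    assume "replicate d 0 = (replicate d (0::nat))[0 := 1]"
    then have "replicate d 0 ! 0 = (replicate d (0::nat))[0 := 1] ! 0" by simp
    then show False using assms by simp
  qed
qed (use assms in simp)

definition corner_broadcast :: "nat \<Rightarrow> nat \<Rightarrow> nat list \<Rightarrow> nat" where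
  "corner_broadcast d k v = (if v \<in> grid_corners d k then d * (k - 1) else 0)"

lemma resolving_broadcast_corner_broadcast:
  assumes "0 < k"
  shows "resolving_broadcast (grid_V d k) grid_E (corner_broadcast d k)"
  unfolding resolving_broadcast_def
proof (intro conjI allI impI ballI)
  let ?V = "grid_V d k" and ?f = "corner_broadcast d k"
  fix v assume "v \<notin> ?V"
  then show "?f v = 0" using grid_corners_subset[OF assms] by (auto simp: corner_broadcast_def)
next
  let ?V = "grid_V d k" and ?f = "corner_broadcast d k"
  fix x y assume xy: "x \<in> ?V" "y \<in> ?V" "x \<noteq> y"
  then obtain z where z: "z \<in> grid_corners d k" "l1_dist x z \<noteq> l1_dist y z"
    using grid_corners_resolve[OF assms] by blast
  have zV: "z \<in> ?V" using z(1) grid_corners_subset[OF assms] by blast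
  have "tdist ?V grid_E (?f z) v z = l1_dist v z" if "v \<in> ?V" for v
    using z(1) gdist_grid[OF that zV] l1_dist_le_diameter[OF that zV]
    by (simp add: tdist_def corner_broadcast_def)
  moreover have "d * (k - 1) \<noteq> 0"
    using z(2) l1_dist_le_diameter[OF xy(1) zV] l1_dist_le_diameter[OF xy(2) zV] by linarith
  then have "0 < ?f z" using z(1) by (simp add: corner_broadcast_def)
  ultimately show "\<exists>z\<in>?V. 0 < ?f z \<and> tdist ?V grid_E (?f z) x z \<noteq> tdist ?V grid_E (?f z) y z"
    using zV z(2) xy by auto
qed

lemma bdim_grid_le:
  assumes "0 < k"
  shows "bdim (grid_V d k) grid_E \<le> (d + 1) * (d * (k - 1))"
proof -
  have "bdim (grid_V d k) grid_E \<le> (\<Sum>v\<in>grid_V d k. corner_broadcast d k v)"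
    using resolving_broadcast_corner_broadcast[OF assms] by (rule bdim_le)
  also have "\<dots> = card (grid_corners d k) * (d * (k - 1))"
    using sum.inter_restrict[OF finite_grid_V[of d k], where g = "\<lambda>_. d * (k - 1)" and B = "grid_corners d k"]
      grid_corners_subset[OF assms]
    by (simp add: corner_broadcast_def Int_absorb1 Int_absorb2)
  also have "\<dots> \<le> (d + 1) * (d * (k - 1))" using card_grid_corners by (rule mult_right_mono) simp
  finally show ?thesis .
qed

lemma adj_resolving_set_grid_V: "adj_resolving_set (grid_V d k) grid_E (grid_V d k)"
  unfolding adj_resolving_set_def
proof (intro conjI ballI impI)
  let ?V = "grid_V d k"
  fix x y assume xy: "x \<in> ?V" "y \<in> ?V" "x \<noteq> y"
  then have "l1_dist y x \<noteq> 0" using l1_dist_eq_0_iff grid_V_length by metis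
  then have "tdist ?V grid_E 1 x x \<noteq> tdist ?V grid_E 1 y x"
    using gdist_grid[OF xy(1,1)] gdist_grid[OF xy(2,1)] by (simp add: tdist_def)
  then show "\<exists>z\<in>?V. tdist ?V grid_E 1 x z \<noteq> tdist ?V grid_E 1 y z" using xy(1) by blast
qed simp

lemma adim_grid_le: "adim (grid_V d k) grid_E \<le> k ^ d"
  using adim_le[OF finite_grid_V adj_resolving_set_grid_V] card_grid_V by metis

lemma grid_E_imp_coordinate_step:
  assumes "grid_E x z"
  shows "x \<in> (\<lambda>i. z[i := Suc (z ! i)]) ` {..<length z} \<union> (\<lambda>i. z[i := z ! i - 1]) ` {..<length z}"
proof -
  obtain i where i: "i < length x" "z ! i = Suc (x ! i) \<or> x ! i = Suc (z ! i)"
    and others: "\<forall>j<length x. j \<noteq> i \<longrightarrow> x ! j = z ! j" and len: "length x = length z"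
    using assms unfolding grid_E_def by blast
  have "x = z[i := x ! i]"
  proof (rule nth_equalityI)
    fix j assume "j < length x"
    then show "x ! j = z[i := x ! i] ! j" using others len by (cases "j = i") auto
  qed (use len in simp)
  moreover have "x ! i = z ! i - 1 \<or> x ! i = Suc (z ! i)" using i(2) by auto
  ultimately show ?thesis using i(1) len by auto
qed

lemma card_grid_ball_1:
  assumes z: "z \<in> grid_V d k"
  shows "card {x \<in> grid_V d k. gdist (grid_V d k) grid_E x z \<le> 1} \<le> 2 * d + 1"
proof -
  let ?up = "(\<lambda>i. z[i := Suc (z ! i)]) ` {..<d}" and ?down = "(\<lambda>i. z[i := z ! i - 1]) ` {..<d}"
  have "{x \<in> grid_V d k. gdist (grid_V d k) grid_E x z \<le> 1} \<subseteq> insert z (?up \<union> ?down)"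
  proof
    fix x assume x: "x \<in> {x \<in> grid_V d k. gdist (grid_V d k) grid_E x z \<le> 1}"
    then have xV: "x \<in> grid_V d k" and near: "gdist (grid_V d k) grid_E x z \<le> 1" by auto
    obtain xs where "is_walk (grid_V d k) grid_E xs" "hd xs = x" "last xs = z"
      using grid_walk_exists[OF xV z] by blast
    then have "x = z \<or> grid_E x z" using near by (rule gdist_le_1_imp_adjacent)
    then show "x \<in> insert z (?up \<union> ?down)"
      using grid_E_imp_coordinate_step grid_V_length[OF z] by blast
  qed
  then have "card {x \<in> grid_V d k. gdist (grid_V d k) grid_E x z \<le> 1} \<le> card (insert z (?up \<union> ?down))"
    by (rule card_mono[rotated]) simp
  also have "\<dots> \<le> Suc (card (?up \<union> ?down))" by (simp add: card_insert_if)
  also have "\<dots> \<le> Suc (card ?up + card ?down)" using card_Un_le by simp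
  also have "\<dots> \<le> 2 * d + 1"
    using card_image_le[of "{..<d}" "\<lambda>i. z[i := Suc (z ! i)]"]
      card_image_le[of "{..<d}" "\<lambda>i. z[i := z ! i - 1]"] by simp
  finally show ?thesis .
qed

lemma adim_grid_ge: "k ^ d \<le> (2 * d + 1) * adim (grid_V d k) grid_E + 1"
proof -
  let ?V = "grid_V d k"
  obtain A where A: "finite A" "adj_resolving_set ?V grid_E A" "card A = adim ?V grid_E"
    using adim_attained[OF finite_grid_V adj_resolving_set_grid_V] .
  have "card ?V \<le> (\<Sum>z\<in>A. card {x\<in>?V. gdist ?V grid_E x z \<le> 1}) + 1"
    by (rule card_le_sum_card_balls[OF finite_grid_V A(1), where r = "\<lambda>_. 1"])
      (use A(2) in \<open>auto simp: adj_resolving_set_def\<close>)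
  also have "\<dots> \<le> (\<Sum>z\<in>A. 2 * d + 1) + 1"
    using A(2) card_grid_ball_1 unfolding adj_resolving_set_def
    by (intro add_right_mono sum_mono) blast
  finally show ?thesis using A(3) card_grid_V by (simp add: mult.commute)
qed

definition grid_axis :: "nat \<Rightarrow> nat \<Rightarrow> nat list" where
  "grid_axis d j = (replicate d 0)[0 := j]"

lemma grid_axis_nth_0: "0 < d \<Longrightarrow> grid_axis d j ! 0 = j"
  by (simp add: grid_axis_def)

lemma grid_axis_in_grid_V: "0 < d \<Longrightarrow> j < k \<Longrightarrow> grid_axis d j \<in> grid_V d k"
  by (auto simp: grid_axis_def grid_V_def nth_list_update)

lemma card_grid_axis_ball:
  assumes "0 < d" "z \<in> grid_V d k"
  shows "card {x \<in> grid_axis d ` {..<k}. gdist (grid_V d k) grid_E x z \<le> r} \<le> 2 * r + 1"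
proof -
  let ?B = "{x \<in> grid_axis d ` {..<k}. gdist (grid_V d k) grid_E x z \<le> r}"
  have "inj_on (\<lambda>x. x ! 0) ?B" using grid_axis_nth_0[OF assms(1)] by (auto intro: inj_onI)
  moreover have "(\<lambda>x. x ! 0) ` ?B \<subseteq> {j. absdiff j (z ! 0) \<le> r}"
  proof clarify
    fix j assume "j < k" "gdist (grid_V d k) grid_E (grid_axis d j) z \<le> r"
    then have "l1_dist (grid_axis d j) z \<le> r"
      using gdist_grid[OF grid_axis_in_grid_V[OF assms(1)] assms(2)] by simp
    then show "absdiff (grid_axis d j ! 0) (z ! 0) \<le> r"
      using absdiff_nth_le_l1_dist[of 0 "grid_axis d j" z] assms(1) by (simp add: grid_axis_def)
  qed
  ultimately have "card ?B \<le> card {j. absdiff j (z ! 0) \<le> r}"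
    using finite_absdiff_le by (rule card_inj_on_le)
  then show ?thesis using card_absdiff_le le_trans by blast
qed

lemma bdim_grid_ge:
  assumes "0 < d"
  shows "k \<le> 3 * bdim (grid_V d k) grid_E + 1"
proof (cases "k = 0")
  case False
  let ?V = "grid_V d k" and ?L = "grid_axis d ` {..<k}"
  obtain f where f: "resolving_broadcast ?V grid_E f" "(\<Sum>v\<in>?V. f v) = bdim ?V grid_E"
    using bdim_attained resolving_broadcast_corner_broadcast False by blast
  define Z where "Z = {z\<in>?V. 0 < f z}"
  have finZ: "finite Z" unfolding Z_def using finite_grid_V by simp
  have LV: "?L \<subseteq> ?V" using grid_axis_in_grid_V[OF assms] by blast
  have resolves: "\<exists>z\<in>Z. tdist ?V grid_E (f z) x z \<noteq> tdist ?V grid_E (f z) y z"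
    if "x \<in> ?V" "y \<in> ?V" "x \<noteq> y" for x y
    using f(1) that unfolding resolving_broadcast_def Z_def by blast
  have "card ?L = k"
    using grid_axis_nth_0[OF assms] by (subst card_image) (metis inj_onI, simp)
  moreover have "card ?L \<le> (\<Sum>z\<in>Z. card {x\<in>?L. gdist ?V grid_E x z \<le> f z}) + 1"
    by (rule card_le_sum_card_balls[OF _ finZ]) (simp, meson LV resolves subsetD)
  moreover have "(\<Sum>z\<in>Z. card {x\<in>?L. gdist ?V grid_E x z \<le> f z}) \<le> (\<Sum>z\<in>Z. 3 * f z)"
  proof (rule sum_mono)
    fix z assume "z \<in> Z"
    then show "card {x\<in>?L. gdist ?V grid_E x z \<le> f z} \<le> 3 * f z"
      using card_grid_axis_ball[OF assms, of z k "f z"] unfolding Z_def by simp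
  qed
  moreover have "(\<Sum>z\<in>Z. f z) = (\<Sum>v\<in>?V. f v)"
    by (rule sum.mono_neutral_left[OF finite_grid_V]) (auto simp: Z_def)
  ultimately show ?thesis using f(2) by (simp add: sum_distrib_left[symmetric])
qed simp

lemma grid_dimension_bounds:
  assumes "1 \<le> d" "2 \<le> k"
  shows "k \<le> 4 * bdim (grid_V d k) grid_E" "bdim (grid_V d k) grid_E \<le> (d + 1) * d * k"
    "k ^ d \<le> 2 * (d + 1) * adim (grid_V d k) grid_E" "adim (grid_V d k) grid_E \<le> k ^ d"
    "0 < metric_dim (grid_V d k) grid_E" "metric_dim (grid_V d k) grid_E \<le> d + 1"
proof -
  show "k \<le> 4 * bdim (grid_V d k) grid_E" using bdim_grid_ge[of d k] assms by simp
  have "d * (k - 1) \<le> d * k" by simp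
  then have "(d + 1) * (d * (k - 1)) \<le> (d + 1) * d * k" unfolding mult.assoc by (rule mult_le_mono2)
  then show "bdim (grid_V d k) grid_E \<le> (d + 1) * d * k" using bdim_grid_le[of k d] assms by simp
  have "2 \<le> k ^ d" using assms self_le_power[of k d] by simp
  moreover have "k ^ d \<le> (2 * d + 1) * adim (grid_V d k) grid_E + 1" by (rule adim_grid_ge)
  ultimately have "1 \<le> adim (grid_V d k) grid_E" by (cases "adim (grid_V d k) grid_E = 0") simp_all
  with \<open>k ^ d \<le> (2 * d + 1) * adim (grid_V d k) grid_E + 1\<close>
  show "k ^ d \<le> 2 * (d + 1) * adim (grid_V d k) grid_E" by (simp add: algebra_simps)
  show "adim (grid_V d k) grid_E \<le> k ^ d" by (rule adim_grid_le)
  show "0 < metric_dim (grid_V d k) grid_E" using metric_dim_grid_pos assms by blast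
  show "metric_dim (grid_V d k) grid_E \<le> d + 1" using metric_dim_grid_le assms by simp
qed

lemma filterlim_ratio_at_top:
  fixes a b :: "nat \<Rightarrow> nat"
  assumes "0 < C" and "\<And>k. 2 \<le> k \<Longrightarrow> 0 < b k \<and> k * b k \<le> C * a k"
  shows "filterlim (\<lambda>k. real (a k) / real (b k)) at_top sequentially"
proof (rule filterlim_at_top_mono)
  show "filterlim (\<lambda>k. 1 / real C * real k) at_top sequentially"
    by (rule filterlim_tendsto_pos_mult_at_top[OF tendsto_const])
      (use assms(1) filterlim_real_sequentially in auto)
  have "1 / real C * real k \<le> real (a k) / real (b k)" if "2 \<le> k" for k
  proof -
    have "real k * real (b k) \<le> real C * real (a k)"
      using assms(2)[OF that] by (metis of_nat_le_iff of_nat_mult)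
    then show ?thesis using assms(1) assms(2)[OF that] by (simp add: field_simps)
  qed
  then show "\<forall>\<^sub>F k in sequentially. 1 / real C * real k \<le> real (a k) / real (b k)"
    using eventually_ge_at_top[of 2] by (rule eventually_mono[rotated]) blast
qed

lemma grid_bdim_linear_adim_polynomial:
  assumes "1 \<le> d"
  shows "\<exists>a1 a2 b1 b2 :: real. a1 > 0 \<and> a2 > 0 \<and> b1 > 0 \<and> b2 > 0 \<and>
            (\<forall>k::nat. k \<ge> 2 \<longrightarrow>
               a1 * real k \<le> real (bdim (grid_V d k) grid_E) \<and>
               real (bdim (grid_V d k) grid_E) \<le> a2 * real k \<and>
               b1 * real k ^ d \<le> real (adim (grid_V d k) grid_E) \<and>
               real (adim (grid_V d k) grid_E) \<le> b2 * real k ^ d)"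
proof (intro exI conjI allI impI)
  fix k :: nat assume k: "2 \<le> k"
  let ?A = "adim (grid_V d k) grid_E" and ?B = "bdim (grid_V d k) grid_E"
  note bounds = grid_dimension_bounds[OF assms k]
  show "1 / 4 * real k \<le> real ?B" using bounds(1) by linarith
  have "real ?B \<le> real ((d + 1) * d * k)" using bounds(2) by (simp only: of_nat_le_iff)
  then show "real ?B \<le> real ((d + 1) * d) * real k" by simp
  have "real (k ^ d) \<le> real (2 * (d + 1) * ?A)" using bounds(3) by (simp only: of_nat_le_iff)
  then show "1 / real (2 * (d + 1)) * real k ^ d \<le> real ?A" by (simp add: field_simps)
  have "real ?A \<le> real (k ^ d)" using bounds(4) by (simp only: of_nat_le_iff)
  then show "real ?A \<le> 1 * real k ^ d" by simp
qed (use assms in \<open>auto intro: add_pos_nonneg\<close>)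

lemma filterlim_grid_adim_over_bdim:
  assumes "2 \<le> d"
  shows "filterlim (\<lambda>k. real (adim (grid_V d k) grid_E) / real (bdim (grid_V d k) grid_E))
           at_top sequentially"
proof (rule filterlim_ratio_at_top[where C = "2 * (d + 1) * ((d + 1) * d)"])
  fix k :: nat assume k: "2 \<le> k"
  let ?A = "adim (grid_V d k) grid_E" and ?B = "bdim (grid_V d k) grid_E"
  have "1 \<le> d" using assms by simp
  note bounds = grid_dimension_bounds[OF this k]
  have "k * ?B \<le> (d + 1) * d * (k * k)" using bounds(2) by (simp add: mult_le_mono2)
  also have "\<dots> \<le> (d + 1) * d * k ^ d"
    using power_increasing[of 2 d k] assms k by (simp add: power2_eq_square)
  also have "\<dots> \<le> (d + 1) * d * (2 * (d + 1) * ?A)" using bounds(3) by (rule mult_le_mono2)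
  also have "\<dots> = 2 * (d + 1) * ((d + 1) * d) * ?A" by (simp only: ac_simps)
  finally show "0 < ?B \<and> k * ?B \<le> 2 * (d + 1) * ((d + 1) * d) * ?A"
    using bounds(1) k by simp
qed (use assms in simp)

lemma filterlim_grid_bdim_over_metric_dim:
  assumes "1 \<le> d"
  shows "filterlim (\<lambda>k. real (bdim (grid_V d k) grid_E) / real (metric_dim (grid_V d k) grid_E))
           at_top sequentially"
proof (rule filterlim_ratio_at_top[where C = "4 * (d + 1)"])
  fix k :: nat assume k: "2 \<le> k"
  let ?B = "bdim (grid_V d k) grid_E" and ?M = "metric_dim (grid_V d k) grid_E"
  note bounds = grid_dimension_bounds[OF assms k]
  have "k * ?M \<le> 4 * ?B * (d + 1)" using bounds(1,6) by (rule mult_le_mono)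
  also have "\<dots> = 4 * (d + 1) * ?B" by (simp only: ac_simps)
  finally show "0 < ?M \<and> k * ?M \<le> 4 * (d + 1) * ?B" using bounds(5) by simp
qed simp

theorem theorem5p4:
  fixes d :: nat
  assumes "d \<ge> 2"
  shows "(\<exists>a1 a2 b1 b2 :: real. a1 > 0 \<and> a2 > 0 \<and> b1 > 0 \<and> b2 > 0 \<and>
            (\<forall>k::nat. k \<ge> 2 \<longrightarrow>
               a1 * real k \<le> real (bdim (grid_V d k) grid_E) \<and>
               real (bdim (grid_V d k) grid_E) \<le> a2 * real k \<and>
               b1 * real k ^ d \<le> real (adim (grid_V d k) grid_E) \<and>
               real (adim (grid_V d k) grid_E) \<le> b2 * real k ^ d))
       \<and> filterlim (\<lambda>k. real (adim (grid_V d k) grid_E) / real (bdim (grid_V d k) grid_E))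
            at_top sequentially
       \<and> filterlim (\<lambda>k. real (bdim (grid_V d k) grid_E) / real (metric_dim (grid_V d k) grid_E))
            at_top sequentially"
proof -
  have "1 \<le> d" using assms by simp
  then show ?thesis
    using grid_bdim_linear_adim_polynomial filterlim_grid_adim_over_bdim[OF assms]
      filterlim_grid_bdim_over_metric_dim by blast
qed

end
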